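(* Let $n\geq 1$ be an integer and let $0\leq p_0\leq p_1\leq\cdots\leq p_n\leq 1$. Then there exists an index $i\in\{1,\dots,n\}$ such that for every $\alpha\in[0,1]$, \[ h_2(\alpha p_{i-1}+(1-\alpha)p_i)-\alpha h_2(p_{i-1})-(1-\alpha)h_2(p_i)\leq \frac{8}{(n+1)^2}. \]
   Context: $h_2(p)=-p\log p-(1-p)\log(1-p)$ is the binary entropy function with natural logarithm. *)

theory Defs
  imports Complex_Main
begin

text \<open>Binary entropy with natural logarithm, using the convention 0 log 0 = 0.\<close>
definition h2 :: "real \<Rightarrow> real" where
  "h2 p = (if p = 0 \<or> p = 1 then 0 else - p * ln p - (1 - p) * ln (1 - p))"

end

theory Submission
  imports Defs
begin

text \<open>
  Write \<open>\<phi> x = - x ln x\<close>, so that \<open>h2 p = \<phi> p + \<phi> (1 - p)\<close>. With \<open>x\<close> the mixture of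
  \<open>a\<close> and \<open>b\<close>, the estimate \<open>ln t \<le> 2 (sqrt t - 1)\<close> bounds the Jensen gap of \<open>\<phi>\<close> at
  \<open>a, b\<close> by \<open>2 / sqrt x\<close> times the Jensen gap of the cube at \<open>sqrt a, sqrt b\<close>, and an
  elementary polynomial inequality bounds that by \<open>3/4 (sqrt b - sqrt a)\<^sup>2\<close>. Hence the
  Jensen gap of \<open>h2\<close> at \<open>p \<le> q\<close> is at most \<open>3/4 (u\<^sup>2 + v\<^sup>2)\<close> with
  \<open>u = sqrt q - sqrt p\<close> and \<open>v = sqrt (1 - p) - sqrt (1 - q)\<close>. Along the chain these
  increments telescope to at most 2, so some step has \<open>u + v \<le> 2 / n\<close>, and then
  \<open>3/4 (u\<^sup>2 + v\<^sup>2) \<le> 3 / n\<^sup>2 \<le> 8 / (n + 1)\<^sup>2\<close> (for \<open>n = 1\<close> use \<open>u, v \<le> 1\<close>).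
\<close>

definition jensen_gap :: "(real \<Rightarrow> real) \<Rightarrow> real \<Rightarrow> real \<Rightarrow> real \<Rightarrow> real" where
  "jensen_gap f a b \<alpha> = f (\<alpha> * a + (1 - \<alpha>) * b) - \<alpha> * f a - (1 - \<alpha>) * f b"

lemma jensen_gap_swap: "jensen_gap f a b \<alpha> = jensen_gap f b a (1 - \<alpha>)"
  by (simp add: jensen_gap_def algebra_simps)

lemma jensen_gap_add:
  "jensen_gap (\<lambda>x. f x + g x) a b \<alpha> = jensen_gap f a b \<alpha> + jensen_gap g a b \<alpha>"
  by (simp add: jensen_gap_def algebra_simps)

lemma jensen_gap_reflect:
  "jensen_gap (\<lambda>x. f (1 - x)) a b \<alpha> = jensen_gap f (1 - a) (1 - b) \<alpha>"
  by (simp add: jensen_gap_def algebra_simps)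

text \<open>With \<open>G = sqrt (A B)\<close>: \<open>X (A + B - 2 G) - (B - X) (X - A) = (X - G)\<^sup>2\<close> and
  \<open>(B - A)\<^sup>2 = (A + B - 2 G) (A + B + 2 G)\<close>.\<close>
lemma mult_endpoint_distances_le:
  fixes A B X :: real
  assumes "0 \<le> A" "A \<le> X" "X \<le> B"
  shows "A * B * ((B - X) * (X - A)) \<le> 1/8 * (B - A)^2 * (A + B) * X"
proof -
  define G where "G = sqrt (A * B)"
  have "G \<ge> 0" and G_sq: "G^2 = A * B"
    using assms by (auto simp: G_def)
  have gap_nonneg: "A + B - 2 * G \<ge> 0"
  proof -
    have "A + B - 2 * G = (sqrt A - sqrt B)^2"
      using assms by (simp add: G_def real_sqrt_mult power2_eq_square algebra_simps)
    then show ?thesis by simp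
  qed
  have product_le: "(B - X) * (X - A) \<le> X * (A + B - 2 * G)"
  proof -
    have "X * (A + B - 2 * G) - (B - X) * (X - A) = (X - G)^2"
      using G_sq by (simp add: power2_eq_square algebra_simps)
    then show ?thesis
      using zero_le_power2[of "X - G"] by linarith
  qed
  have "8 * G^2 \<le> (A + B + 2 * G) * (A + B)"
  proof -
    have "(4 * G) * (2 * G) \<le> (A + B + 2 * G) * (A + B)"
      using gap_nonneg \<open>G \<ge> 0\<close> by (intro mult_mono) auto
    then show ?thesis by (simp add: power2_eq_square)
  qed
  then have "(A + B - 2 * G) * (8 * G^2) \<le> (A + B - 2 * G) * ((A + B + 2 * G) * (A + B))"
    using gap_nonneg by (rule mult_left_mono)
  also have "\<dots> = ((A + B - 2 * G) * (A + B + 2 * G)) * (A + B)"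
    by (simp only: mult.assoc)
  also have "(A + B - 2 * G) * (A + B + 2 * G) = (B - A)^2"
    using G_sq by (simp add: power2_eq_square algebra_simps)
  finally have G_bound: "G^2 * (A + B - 2 * G) \<le> 1/8 * (B - A)^2 * (A + B)"
    by (simp add: algebra_simps)
  have "A * B * ((B - X) * (X - A)) \<le> A * B * (X * (A + B - 2 * G))"
    using product_le assms by (intro mult_left_mono) auto
  also have "\<dots> = X * (G^2 * (A + B - 2 * G))"
    using G_sq by (simp add: algebra_simps)
  also have "\<dots> \<le> X * (1/8 * (B - A)^2 * (A + B))"
    using G_bound assms by (intro mult_left_mono) auto
  finally show ?thesis by (simp add: algebra_simps)
qed

lemma cube_jensen_gap_le:
  fixes A B X \<alpha> :: real
  assumes "0 \<le> A" "A \<le> B" "0 \<le> \<alpha>" "\<alpha> \<le> 1" "0 \<le> X"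
    and X_sq: "X^2 = \<alpha> * A^2 + (1 - \<alpha>) * B^2"
  shows "\<alpha> * A^3 + (1 - \<alpha>) * B^3 - X^3 \<le> 3/8 * (B - A)^2 * X"
proof -
  have "A^2 \<le> B^2"
    using assms by (intro power_mono) auto
  moreover have "X^2 - A^2 = (1 - \<alpha>) * (B^2 - A^2)" "B^2 - X^2 = \<alpha> * (B^2 - A^2)"
    using X_sq by (simp_all add: algebra_simps)
  moreover have "(1 - \<alpha>) * (B^2 - A^2) \<ge> 0" "\<alpha> * (B^2 - A^2) \<ge> 0"
    using assms \<open>A^2 \<le> B^2\<close> by simp_all
  ultimately have "A^2 \<le> X^2" "X^2 \<le> B^2"
    by linarith+
  then have AX: "A \<le> X" and XB: "X \<le> B"
    using assms by (auto intro: power2_le_imp_le)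
  show ?thesis
  proof (cases "A = B")
    case True
    with AX XB show ?thesis by (simp add: algebra_simps)
  next
    case False
    with assms have "A < B" by simp
    have "(B - A) * ((A + B) * (\<alpha> * A^3 + (1 - \<alpha>) * B^3 - X^3))
        = (\<alpha> * (B^2 - A^2)) * (A^3 - B^3) + (B^2 - A^2) * (B^3 - X^3)"
      by (simp add: algebra_simps power2_eq_square power3_eq_cube)
    also have "\<dots> = (B - A) * ((B - X) * (X - A) * (X * (A + B) + A * B))"
      unfolding \<open>B^2 - X^2 = \<alpha> * (B^2 - A^2)\<close>[symmetric]
      by (simp add: algebra_simps power2_eq_square power3_eq_cube)
    finally have "(A + B) * (\<alpha> * A^3 + (1 - \<alpha>) * B^3 - X^3)
        = (B - X) * (X - A) * (X * (A + B) + A * B)"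
      using \<open>A < B\<close> by simp
    also have "\<dots> = (B - X) * (X - A) * (X * (A + B)) + A * B * ((B - X) * (X - A))"
      by (simp add: algebra_simps)
    also have "\<dots> \<le> (B - A)^2 / 4 * (X * (A + B)) + 1/8 * (B - A)^2 * (A + B) * X"
    proof (rule add_mono)
      have "(B - A)^2 - 4 * ((B - X) * (X - A)) = (2 * X - (A + B))^2"
        by (simp add: power2_eq_square algebra_simps)
      then have "(B - X) * (X - A) \<le> (B - A)^2 / 4"
        using zero_le_power2[of "2 * X - (A + B)"] by linarith
      then show "(B - X) * (X - A) * (X * (A + B)) \<le> (B - A)^2 / 4 * (X * (A + B))"
        using assms AX by (intro mult_right_mono) auto
      show "A * B * ((B - X) * (X - A)) \<le> 1/8 * (B - A)^2 * (A + B) * X"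
        using mult_endpoint_distances_le assms AX XB by blast
    qed
    also have "\<dots> = (A + B) * (3/8 * (B - A)^2 * X)"
      by (simp add: algebra_simps)
    finally show ?thesis
      using \<open>A < B\<close> assms by (simp add: mult_le_cancel_left_pos)
  qed
qed

lemma mult_ln_diff_le_sqrt_diff:
  fixes x y :: real
  assumes "0 \<le> y" "0 < x"
  shows "y * (ln y - ln x) \<le> 2 * y * (sqrt y - sqrt x) / sqrt x"
proof (cases "y = 0")
  case False
  with assms have "y > 0" by simp
  have "ln y - ln x = 2 * ln (sqrt y / sqrt x)"
    using \<open>y > 0\<close> assms by (simp add: ln_div ln_sqrt)
  also have "\<dots> \<le> 2 * (sqrt y / sqrt x - 1)"
    using ln_le_minus_one[of "sqrt y / sqrt x"] \<open>y > 0\<close> assms by simp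
  also have "\<dots> = 2 * (sqrt y - sqrt x) / sqrt x"
    using assms by (simp add: field_simps)
  finally have "ln y - ln x \<le> 2 * (sqrt y - sqrt x) / sqrt x" .
  from mult_left_mono[OF this assms(1)] show ?thesis
    by (simp add: algebra_simps)
qed simp

lemma jensen_gap_neg_xlnx_le_cube_gap:
  fixes A B X \<alpha> :: real
  assumes "0 \<le> A" "0 \<le> B" "0 \<le> \<alpha>" "\<alpha> \<le> 1" "0 < X"
    and X_sq: "X^2 = \<alpha> * A^2 + (1 - \<alpha>) * B^2"
  shows "jensen_gap (\<lambda>x. - x * ln x) (A^2) (B^2) \<alpha>
    \<le> 2 * (\<alpha> * A^3 + (1 - \<alpha>) * B^3 - X^3) / X"
proof -
  have "jensen_gap (\<lambda>x. - x * ln x) (A^2) (B^2) \<alpha>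
      = \<alpha> * (A^2 * (ln (A^2) - ln (X^2))) + (1 - \<alpha>) * (B^2 * (ln (B^2) - ln (X^2)))"
    by (simp add: jensen_gap_def X_sq algebra_simps)
  also have "\<dots> \<le> \<alpha> * (2 * A^2 * (A - X) / X) + (1 - \<alpha>) * (2 * B^2 * (B - X) / X)"
    using mult_ln_diff_le_sqrt_diff[of "A^2" "X^2"] mult_ln_diff_le_sqrt_diff[of "B^2" "X^2"] assms(1-5)
    by (intro add_mono mult_left_mono) auto
  also have "\<dots> = (\<alpha> * (2 * A^2 * (A - X)) + (1 - \<alpha>) * (2 * B^2 * (B - X))) / X"
    by (simp add: add_divide_distrib)
  also have "\<dots> = 2 * (\<alpha> * A^3 + (1 - \<alpha>) * B^3 - X^3) / X"
  proof -
    have "X^3 = X * (\<alpha> * A^2 + (1 - \<alpha>) * B^2)"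
      unfolding X_sq[symmetric] by (simp add: power3_eq_cube power2_eq_square)
    then show ?thesis
      by (simp add: power2_eq_square power3_eq_cube algebra_simps)
  qed
  finally show ?thesis .
qed

lemma jensen_gap_neg_xlnx_le_ordered:
  fixes a b \<alpha> :: real
  assumes "0 \<le> a" "a \<le> b" "0 \<le> \<alpha>" "\<alpha> \<le> 1"
  shows "jensen_gap (\<lambda>x. - x * ln x) a b \<alpha> \<le> 3/4 * (sqrt b - sqrt a)^2"
proof -
  define x where "x = \<alpha> * a + (1 - \<alpha>) * b"
  have "\<alpha> * a \<ge> 0" "(1 - \<alpha>) * b \<ge> 0"
    using assms by auto
  show ?thesis
  proof (cases "x = 0")
    case True
    with \<open>\<alpha> * a \<ge> 0\<close> \<open>(1 - \<alpha>) * b \<ge> 0\<close> have "\<alpha> * a = 0" "(1 - \<alpha>) * b = 0"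
      unfolding x_def by linarith+
    then have "jensen_gap (\<lambda>x. - x * ln x) a b \<alpha> = 0"
      unfolding jensen_gap_def x_def[symmetric] True by (auto simp: mult.assoc[symmetric])
    then show ?thesis by simp
  next
    case False
    with \<open>\<alpha> * a \<ge> 0\<close> \<open>(1 - \<alpha>) * b \<ge> 0\<close> have "x > 0"
      unfolding x_def by linarith
    define A B X where "A = sqrt a" and "B = sqrt b" and "X = sqrt x"
    have "0 \<le> A" "A \<le> B" "X > 0"
      using assms \<open>x > 0\<close> by (simp_all add: A_def B_def X_def)
    have a_eq: "a = A^2" and b_eq: "b = B^2"
      using assms by (simp_all add: A_def B_def)
    have X_sq: "X^2 = \<alpha> * A^2 + (1 - \<alpha>) * B^2"
      using \<open>x > 0\<close> by (simp add: X_def x_def flip: a_eq b_eq)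
    have "jensen_gap (\<lambda>x. - x * ln x) a b \<alpha> \<le> 2 * (\<alpha> * A^3 + (1 - \<alpha>) * B^3 - X^3) / X"
      unfolding a_eq b_eq using assms \<open>0 \<le> A\<close> \<open>A \<le> B\<close> \<open>X > 0\<close> X_sq
      by (intro jensen_gap_neg_xlnx_le_cube_gap) auto
    also have "\<dots> \<le> 2 * (3/8 * (B - A)^2 * X) / X"
      using cube_jensen_gap_le[of A B \<alpha> X] X_sq assms \<open>0 \<le> A\<close> \<open>A \<le> B\<close> \<open>X > 0\<close>
      by (intro divide_right_mono mult_left_mono) auto
    also have "\<dots> = 3/4 * (sqrt b - sqrt a)^2"
      using \<open>X > 0\<close> by (simp add: A_def B_def)
    finally show ?thesis .
  qed
qed

lemma jensen_gap_neg_xlnx_le: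
  fixes a b \<alpha> :: real
  assumes "0 \<le> a" "0 \<le> b" "0 \<le> \<alpha>" "\<alpha> \<le> 1"
  shows "jensen_gap (\<lambda>x. - x * ln x) a b \<alpha> \<le> 3/4 * (sqrt b - sqrt a)^2"
proof (cases "a \<le> b")
  case False
  then have "jensen_gap (\<lambda>x. - x * ln x) b a (1 - \<alpha>) \<le> 3/4 * (sqrt a - sqrt b)^2"
    using assms by (intro jensen_gap_neg_xlnx_le_ordered) auto
  then show ?thesis
    by (simp add: jensen_gap_swap[of _ a] power2_commute)
qed (use assms jensen_gap_neg_xlnx_le_ordered in auto)

lemma h2_eq_neg_xlnx: "h2 = (\<lambda>x. - x * ln x + - (1 - x) * ln (1 - x))"
  by (auto simp: h2_def fun_eq_iff algebra_simps)

lemma jensen_gap_h2_le: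
  fixes p q \<alpha> :: real
  assumes "0 \<le> p" "p \<le> 1" "0 \<le> q" "q \<le> 1" "0 \<le> \<alpha>" "\<alpha> \<le> 1"
  shows "jensen_gap h2 p q \<alpha> \<le> 3/4 * ((sqrt q - sqrt p)^2 + (sqrt (1 - p) - sqrt (1 - q))^2)"
proof -
  have "jensen_gap h2 p q \<alpha>
      = jensen_gap (\<lambda>x. - x * ln x) p q \<alpha> + jensen_gap (\<lambda>x. - x * ln x) (1 - p) (1 - q) \<alpha>"
    unfolding h2_eq_neg_xlnx jensen_gap_add jensen_gap_reflect[of "\<lambda>x. - x * ln x"] ..
  also have "\<dots> \<le> 3/4 * (sqrt q - sqrt p)^2 + 3/4 * (sqrt (1 - q) - sqrt (1 - p))^2"
    using assms by (intro add_mono jensen_gap_neg_xlnx_le) auto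
  finally show ?thesis
    by (simp add: power2_commute algebra_simps)
qed

lemma sum_squares_le_of_sum_le:
  fixes u v :: real and n :: nat
  assumes "0 \<le> u" "u \<le> 1" "0 \<le> v" "v \<le> 1" "n \<ge> 1" and sum_le: "u + v \<le> 2 / n"
  shows "3/4 * (u^2 + v^2) \<le> 8 / (real n + 1)^2"
proof (cases "n = 1")
  case True
  have "u^2 \<le> 1" "v^2 \<le> 1"
    using assms by (auto simp: power_le_one)
  with True show ?thesis by simp
next
  case False
  with assms have n: "real n \<ge> 2" by simp
  have "u^2 + v^2 \<le> (u + v)^2"
    using assms by (simp add: power2_eq_square algebra_simps)
  also have "\<dots> \<le> (2 / n)^2"
    using assms by (intro power_mono) auto
  finally have "3/4 * (u^2 + v^2) \<le> 3 / (real n)^2"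
    by (simp add: power_divide)
  also have "\<dots> \<le> 8 / (real n + 1)^2"
  proof -
    have "real n * (5 * real n - 6) \<ge> 2 * 4"
      using n by (intro mult_mono) auto
    then have "3 * (real n + 1)^2 \<le> 8 * (real n)^2"
      by (simp add: power2_eq_square algebra_simps)
    then show ?thesis
      using n by (simp add: field_simps)
  qed
  finally show ?thesis .
qed

lemma jensen_gap_h2_step_le:
  fixes p q \<alpha> :: real and n :: nat
  assumes "0 \<le> p" "p \<le> q" "q \<le> 1" "0 \<le> \<alpha>" "\<alpha> \<le> 1" "n \<ge> 1"
    and "(sqrt q - sqrt p) + (sqrt (1 - p) - sqrt (1 - q)) \<le> 2 / n"
  shows "jensen_gap h2 p q \<alpha> \<le> 8 / (real n + 1)^2"
proof -
  have "sqrt p \<le> sqrt q" "sqrt (1 - q) \<le> sqrt (1 - p)" "sqrt q \<le> 1" "sqrt (1 - p) \<le> 1"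
    "0 \<le> sqrt p" "0 \<le> sqrt (1 - q)"
    using assms by auto
  then have "0 \<le> sqrt q - sqrt p" "sqrt q - sqrt p \<le> 1"
    "0 \<le> sqrt (1 - p) - sqrt (1 - q)" "sqrt (1 - p) - sqrt (1 - q) \<le> 1"
    by linarith+
  then show ?thesis
    using jensen_gap_h2_le[of p q \<alpha>] sum_squares_le_of_sum_le assms by fastforce
qed

lemma exists_le_of_sum_le:
  fixes f :: "nat \<Rightarrow> real"
  assumes "n > 0" "(\<Sum>j<n. f j) \<le> c"
  shows "\<exists>j<n. f j \<le> c / n"
proof (rule ccontr)
  assume "\<not> ?thesis"
  then have "(\<Sum>j<n. c / n) < (\<Sum>j<n. f j)"
    using assms by (intro sum_strict_mono) auto
  with assms show False by simp
qed

lemma sum_sqrt_increments_le_two: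
  fixes p :: "nat \<Rightarrow> real"
  assumes "0 \<le> p 0" "p 0 \<le> 1" "0 \<le> p n" "p n \<le> 1"
  shows "(\<Sum>j<n. (sqrt (p (Suc j)) - sqrt (p j)) + (sqrt (1 - p j) - sqrt (1 - p (Suc j)))) \<le> 2"
proof -
  have "(\<Sum>j<n. (sqrt (p (Suc j)) - sqrt (p j)) + (sqrt (1 - p j) - sqrt (1 - p (Suc j))))
      = (sqrt (p n) - sqrt (p 0)) + (sqrt (1 - p 0) - sqrt (1 - p n))"
    using sum_lessThan_telescope[of "\<lambda>j. sqrt (p j)" n]
      sum_lessThan_telescope'[of "\<lambda>j. sqrt (1 - p j)" n]
    by (simp add: sum.distrib)
  also have "\<dots> \<le> 2"
    using assms real_sqrt_ge_zero[of "p 0"] real_sqrt_ge_zero[of "1 - p n"]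
      real_sqrt_le_1_iff[of "p n"] real_sqrt_le_1_iff[of "1 - p 0"] by linarith
  finally show ?thesis .
qed

theorem corollary1:
  fixes n :: nat and p :: "nat \<Rightarrow> real"
  assumes "n \<ge> 1"
    and "0 \<le> p 0"
    and "\<And>i. i < n \<Longrightarrow> p i \<le> p (Suc i)"
    and "p n \<le> 1"
  shows "\<exists>i\<in>{1..n}. \<forall>\<alpha>\<in>{0..1::real}.
           h2 (\<alpha> * p (i - 1) + (1 - \<alpha>) * p i) - \<alpha> * h2 (p (i - 1)) - (1 - \<alpha>) * h2 (p i)
             \<le> 8 / (real n + 1)^2"
proof -
  have mono: "p i \<le> p k" if "i \<le> k" "k \<le> n" for i k
    by (rule lift_Suc_mono_le_ivl[of "{..<n}"]) (use that assms(3) in auto)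
  have p_01: "0 \<le> p i \<and> p i \<le> 1" if "i \<le> n" for i
    using mono[of 0 i] mono[of i n] assms(2,4) that by linarith
  have "(\<Sum>j<n. (sqrt (p (Suc j)) - sqrt (p j)) + (sqrt (1 - p j) - sqrt (1 - p (Suc j)))) \<le> 2"
    using p_01[of 0] p_01[of n] by (intro sum_sqrt_increments_le_two) auto
  with assms(1) obtain j where "j < n"
    and step: "(sqrt (p (Suc j)) - sqrt (p j)) + (sqrt (1 - p j) - sqrt (1 - p (Suc j))) \<le> 2 / n"
    using exists_le_of_sum_le[of n] by auto
  have "jensen_gap h2 (p j) (p (Suc j)) \<alpha> \<le> 8 / (real n + 1)^2" if "\<alpha> \<in> {0..1}" for \<alpha>
    using jensen_gap_h2_step_le[OF _ _ _ _ _ assms(1) step] p_01 assms(3) \<open>j < n\<close> that by auto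
  with \<open>j < n\<close> show ?thesis
    by (intro bexI[of _ "Suc j"]) (auto simp: jensen_gap_def)
qed

end
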